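(* Consider the following interactive optimization problem with a single unknown knapsack constraint. Given $n$, a known objective vector $\boldsymbol{v} \in \mathbb{R}^n$ and a known set $X \subseteq \{0,1\}^n$, one wants to solve $$\max\ \boldsymbol{v}\cdot\boldsymbol{x} \quad \text{s.t.}\quad \bar{\boldsymbol{w}}\cdot \boldsymbol{x} \le 1,\ \ \boldsymbol{x}\in X,$$ where the weight vector $\bar{\boldsymbol{w}} \in [0,1]^n$ is unknown to the algorithm; the only access to $\bar{\boldsymbol{w}}$ is through a membership oracle which, given $\boldsymbol{\chi}\in X$, answers (with certainty) whether $\bar{\boldsymbol{w}}\cdot\boldsymbol{\chi}\le 1$. Calling the oracle on a point is called labeling that point. Then for any deterministic algorithm for this problem and any $\epsilon\in(0,1)$, there exists an instance of the problem (as a function of $n$) on which the algorithm takes $\Omega(n^{1/\epsilon})$ oracle calls to label a feasible solution whose objective value is within a multiplicative factor of $(1-\epsilon)$ with respect to the optimal value.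
   Context: The algorithm knows $\boldsymbol{v}$ and $X$ but not $\bar{\boldsymbol{w}}$; a deterministic algorithm chooses each point to label as a function only of the previously obtained labels. The asymptotic bound is in $n$ with $\epsilon$ fixed. *)

theory Defs
  imports Complex_Main
begin

type_synonym vec = "nat \<Rightarrow> real"

text \<open>Vectors of R^n are functions nat => real (only coordinates i < n matter).
  Points of {0,1}^n are represented canonically: 0/1 on coordinates < n, 0 elsewhere.\<close>

definition binvecs :: "nat \<Rightarrow> vec set" where
  "binvecs n = {x. (\<forall>i<n. x i = 0 \<or> x i = 1) \<and> (\<forall>i\<ge>n. x i = 0)}"

definition dot :: "nat \<Rightarrow> vec \<Rightarrow> vec \<Rightarrow> real" where
  "dot n a b = (\<Sum>i<n. a i * b i)"

text \<open>A deterministic algorithm: knows n, v, X, and chooses the next point to label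
  as a function of the list of previously obtained labels.\<close>
type_synonym algorithm = "nat \<Rightarrow> vec \<Rightarrow> vec set \<Rightarrow> bool list \<Rightarrow> vec"

definition member_oracle :: "nat \<Rightarrow> vec \<Rightarrow> vec \<Rightarrow> bool" where
  "member_oracle n w x \<longleftrightarrow> dot n w x \<le> 1"

fun answers :: "algorithm \<Rightarrow> nat \<Rightarrow> vec \<Rightarrow> vec set \<Rightarrow> vec \<Rightarrow> nat \<Rightarrow> bool list" where
  "answers A n v X w 0 = []"
| "answers A n v X w (Suc j) =
     answers A n v X w j @ [member_oracle n w (A n v X (answers A n v X w j))]"

text \<open>The (j+1)-th point labeled by the algorithm (j counted from 0).\<close>
definition query :: "algorithm \<Rightarrow> nat \<Rightarrow> vec \<Rightarrow> vec set \<Rightarrow> vec \<Rightarrow> nat \<Rightarrow> vec" where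
  "query A n v X w j = A n v X (answers A n v X w j)"

definition feasible :: "nat \<Rightarrow> vec set \<Rightarrow> vec \<Rightarrow> vec \<Rightarrow> bool" where
  "feasible n X w x \<longleftrightarrow> x \<in> X \<and> dot n w x \<le> 1"

definition opt :: "nat \<Rightarrow> vec \<Rightarrow> vec set \<Rightarrow> vec \<Rightarrow> real" where
  "opt n v X w = Max {dot n v x | x. feasible n X w x}"

text \<open>A valid instance: v >= 0 (so that multiplicative approximation is meaningful),
  X a subset of {0,1}^n with at least one feasible point, wbar in [0,1]^n.\<close>
definition valid_instance :: "nat \<Rightarrow> vec \<Rightarrow> vec set \<Rightarrow> vec \<Rightarrow> bool" where
  "valid_instance n v X w \<longleftrightarrow>
     (\<forall>i<n. 0 \<le> v i) \<and> (\<forall>i<n. 0 \<le> w i \<and> w i \<le> 1) \<and>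
     X \<subseteq> binvecs n \<and> (\<exists>x. feasible n X w x)"

definition good :: "nat \<Rightarrow> vec \<Rightarrow> vec set \<Rightarrow> vec \<Rightarrow> real \<Rightarrow> vec \<Rightarrow> bool" where
  "good n v X w \<epsilon> x \<longleftrightarrow> feasible n X w x \<and> dot n v x \<ge> (1 - \<epsilon>) * opt n v X w"

definition valid_algorithm :: "algorithm \<Rightarrow> bool" where
  "valid_algorithm A \<longleftrightarrow> (\<forall>n v X h. X \<noteq> {} \<longrightarrow> A n v X h \<in> X)"

end

theory Submission
  imports Defs "HOL-Library.Indicator_Function"
begin

(*
  Let k = nat (ceiling (1/eps)) + 2.  The hard instance has all-ones objective, candidate
  set {0} together with the indicator vectors of the k-subsets of {0..<n}, and hidden
  weights 1/k on a secret k-set T and 1 elsewhere.  The only feasible points are then 0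
  and 1_T, so 1_T is the only (1 - eps)-good point.  Every other candidate receives the
  same label as for T = {} (all weights 1, only 0 feasible), hence the run of the
  algorithm coincides with its run against T = {} until it labels 1_T.  The adversary
  picks for T a k-set whose indicator is not among the first n^(1/eps) points of that
  reference run; such a set exists because n^(1/eps) <= n^(k-2) < (n/k)^k <= C(n,k)
  once n > k^k.
*)

lemma dot_zero_right [simp]: "dot n w (\<lambda>_. 0) = 0"
  by (simp add: dot_def)

lemma dot_indicator:
  assumes "S \<subseteq> {..<n}"
  shows "dot n w (indicator S) = sum w S"
  using assms by (simp add: dot_def Int_absorb1)

lemma indicator_eq_indicator_iff [simp]:
  "(indicator S :: 'a \<Rightarrow> real) = indicator T \<longleftrightarrow> S = T"
  by (metis indicator_eq_1_iff set_eqI)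

lemma indicator_empty: "indicator {} = (\<lambda>_. 0)"
  by (simp add: fun_eq_iff)

lemma answers_eq_if_oracles_agree:
  assumes "\<And>i. i < j \<Longrightarrow>
    member_oracle n w (query A n v X w' i) = member_oracle n w' (query A n v X w' i)"
  shows "answers A n v X w j = answers A n v X w' j"
  using assms by (induction j) (simp_all add: query_def)

lemma exists_card_subset_avoiding:
  fixes q :: "nat \<Rightarrow> 'a \<Rightarrow> real"
  assumes "finite A" and "N < card A choose k"
  shows "\<exists>T. T \<subseteq> A \<and> card T = k \<and> (\<forall>i<N. q i \<noteq> indicator T)"
proof (rule ccontr)
  define Ks where "Ks = {T. T \<subseteq> A \<and> card T = k}"
  assume "\<not> ?thesis"
  then have "indicator ` Ks \<subseteq> q ` {..<N}"
    unfolding Ks_def by force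
  have "card A choose k = card (indicator ` Ks :: ('a \<Rightarrow> real) set)"
    using assms(1) by (simp add: Ks_def card_image inj_on_def n_subsets)
  also have "\<dots> \<le> card (q ` {..<N})"
    using \<open>indicator ` Ks \<subseteq> q ` {..<N}\<close> by (intro card_mono) auto
  also have "\<dots> \<le> N"
    using card_image_le[of "{..<N}" q] by simp
  finally show False
    using assms(2) by simp
qed

lemma power_less_binomial:
  fixes m n :: nat
  assumes "(m + 2) ^ (m + 2) < n\<^sup>2"
  shows "real n ^ m < real (n choose (m + 2))"
proof -
  define k where "k = m + 2"
  have "k ^ k < n\<^sup>2"
    using assms by (simp add: k_def)
  have "k\<^sup>2 \<le> k ^ k"
    unfolding k_def by (rule power_increasing) auto
  then have "k \<le> n"
    using \<open>k ^ k < n\<^sup>2\<close> power_less_imp_less_base[of k 2 n] by linarith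
  then have "0 < real n"
    by (simp add: k_def)
  have "real (k ^ k) < real (n\<^sup>2)"
    using \<open>k ^ k < n\<^sup>2\<close> by (simp only: of_nat_less_iff)
  then have "real n ^ m * real k ^ k < real n ^ m * (real n)\<^sup>2"
    using \<open>0 < real n\<close> by (intro mult_strict_left_mono) simp_all
  also have "\<dots> = real n ^ k"
    by (simp add: k_def power_add power2_eq_square)
  finally have "real n ^ m < (real n / real k) ^ k"
    by (simp add: power_divide pos_less_divide_eq k_def)
  also have "\<dots> \<le> real (n choose k)"
    using binomial_ge_n_over_k_pow_k[OF \<open>k \<le> n\<close>] by simp
  finally show ?thesis
    unfolding k_def .
qed

lemma powr_less_binomial:
  fixes m n :: nat
  assumes "e \<le> real m" and "(m + 2) ^ (m + 2) < n\<^sup>2"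
  shows "real n powr e < real (n choose (m + 2))"
proof -
  have "0 < n"
    using assms(2) by (cases n) auto
  then have "real n powr e \<le> real n powr real m"
    using assms(1) by (intro powr_mono) simp_all
  also have "\<dots> = real n ^ m"
    using \<open>0 < n\<close> by (simp add: powr_realpow)
  also have "\<dots> < real (n choose (m + 2))"
    using assms(2) by (rule power_less_binomial)
  finally show ?thesis .
qed

lemma exists_subset_avoiding_early_queries:
  fixes q :: "nat \<Rightarrow> vec"
  assumes "e \<le> real m" and "(m + 2) ^ (m + 2) < n"
  shows "\<exists>T. T \<subseteq> {..<n} \<and> card T = m + 2 \<and>
    (\<forall>i. real (Suc i) < real n powr e \<longrightarrow> q i \<noteq> indicator T)"
proof -
  define N where "N = nat \<lfloor>real n powr e\<rfloor>"
  have "(m + 2) ^ (m + 2) < n\<^sup>2"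
    using assms(2) le_square[of n] unfolding power2_eq_square by linarith
  have "real N \<le> real n powr e"
    unfolding N_def by (rule of_nat_floor) simp
  also have "\<dots> < real (n choose (m + 2))"
    using assms(1) \<open>(m + 2) ^ (m + 2) < n\<^sup>2\<close> by (rule powr_less_binomial)
  finally obtain T where "T \<subseteq> {..<n}" "card T = m + 2" "\<forall>i<N. q i \<noteq> indicator T"
    using exists_card_subset_avoiding[of "{..<n}" N "m + 2" q] by auto
  moreover have "i < N" if "real (Suc i) < real n powr e" for i
    using that unfolding N_def by linarith
  ultimately show ?thesis
    by blast
qed

definition hard_points :: "nat \<Rightarrow> nat \<Rightarrow> vec set" where
  "hard_points k n = insert (\<lambda>_. 0) (indicator ` {S. S \<subseteq> {..<n} \<and> card S = k})"

definition hidden_weights :: "nat \<Rightarrow> nat set \<Rightarrow> vec" where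
  "hidden_weights k T = (\<lambda>i. if i \<in> T then 1 / real k else 1)"

lemma valid_hard_instance:
  assumes "0 < k"
  shows "valid_instance n (\<lambda>_. 1) (hard_points k n) (hidden_weights k T)"
proof -
  have "hard_points k n \<subseteq> binvecs n"
    by (auto simp: hard_points_def binvecs_def indicator_def)
  moreover have "feasible n (hard_points k n) (hidden_weights k T) (\<lambda>_. 0)"
    by (simp add: feasible_def hard_points_def)
  ultimately show ?thesis
    using assms by (auto simp: valid_instance_def hidden_weights_def)
qed

lemma dot_hidden_weights_gt_1:
  assumes "S \<subseteq> {..<n}" and "2 \<le> card S" and "\<not> S \<subseteq> T" and "0 < k"
  shows "1 < dot n (hidden_weights k T) (indicator S)"
proof -
  obtain i where "i \<in> S" "i \<notin> T"
    using assms(3) by blast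
  have "finite S"
    using assms(1) finite_subset by blast
  have "1 \<le> card (S - {i})"
    using assms(2) \<open>i \<in> S\<close> \<open>finite S\<close> by (simp add: card_Diff_singleton)
  then have "S - {i} \<noteq> {}"
    by (metis card.empty not_one_le_zero)
  then have "0 < sum (hidden_weights k T) (S - {i})"
    using \<open>finite S\<close> assms(4) by (intro sum_pos) (auto simp: hidden_weights_def)
  moreover have "sum (hidden_weights k T) S = 1 + sum (hidden_weights k T) (S - {i})"
    using \<open>finite S\<close> \<open>i \<in> S\<close> \<open>i \<notin> T\<close> by (simp add: sum.remove hidden_weights_def)
  ultimately show ?thesis
    using assms(1) by (simp add: dot_indicator)
qed

lemma member_oracle_hidden_weights:
  assumes "x \<in> hard_points k n" and "T \<subseteq> {..<n}" and "card T \<le> k" and "2 \<le> k"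
  shows "member_oracle n (hidden_weights k T) x \<longleftrightarrow> x = (\<lambda>_. 0) \<or> x = indicator T"
proof -
  have "finite T"
    using assms(2) finite_subset by blast
  consider "x = (\<lambda>_. 0)" | S where "S \<subseteq> {..<n}" "card S = k" "x = indicator S"
    using assms(1) unfolding hard_points_def by blast
  then show ?thesis
  proof cases
    case 1
    then show ?thesis
      by (simp add: member_oracle_def)
  next
    case 2
    show ?thesis
    proof (cases "S \<subseteq> T")
      case True
      then have "S = T"
        using \<open>finite T\<close> 2 assms(3) by (intro card_seteq) simp_all
      have "dot n (hidden_weights k T) (indicator T) = real (card T) / real k"
        using assms(2) by (simp add: dot_indicator hidden_weights_def)
      also have "\<dots> \<le> 1"
        using assms(3,4) by simp
      finally show ?thesis
        using 2 \<open>S = T\<close> by (simp add: member_oracle_def)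
    next
      case False
      then have "1 < dot n (hidden_weights k T) x"
        using 2 assms(4) by (simp add: dot_hidden_weights_gt_1)
      moreover obtain i where "i \<in> S" "i \<notin> T"
        using False by blast
      then have "x i = 1" "indicator T i = (0::real)"
        using 2 by simp_all
      ultimately show ?thesis
        by (auto simp: member_oracle_def)
    qed
  qed
qed

lemma feasible_hard_points_iff:
  assumes "T \<subseteq> {..<n}" and "card T = k" and "2 \<le> k"
  shows "feasible n (hard_points k n) (hidden_weights k T) x \<longleftrightarrow> x = (\<lambda>_. 0) \<or> x = indicator T"
proof -
  have "indicator T \<in> hard_points k n"
    using assms(1,2) by (simp add: hard_points_def)
  then show ?thesis
    using member_oracle_hidden_weights[of x k n T] assms
    by (auto simp: feasible_def member_oracle_def hard_points_def)
qed

lemma opt_hard_instance: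
  assumes "T \<subseteq> {..<n}" and "card T = k" and "2 \<le> k"
  shows "opt n (\<lambda>_. 1) (hard_points k n) (hidden_weights k T) = real k"
proof -
  have "{x. feasible n (hard_points k n) (hidden_weights k T) x} = {\<lambda>_. 0, indicator T}"
    using feasible_hard_points_iff[OF assms] by blast
  then have "{dot n (\<lambda>_. 1) x | x. feasible n (hard_points k n) (hidden_weights k T) x} =
      dot n (\<lambda>_. 1) ` {\<lambda>_. 0, indicator T}"
    by blast
  then show ?thesis
    using assms by (simp add: opt_def dot_indicator)
qed

lemma good_hard_instance_imp_hidden:
  assumes "good n (\<lambda>_. 1) (hard_points k n) (hidden_weights k T) \<epsilon> x"
    and "T \<subseteq> {..<n}" and "card T = k" and "2 \<le> k" and "\<epsilon> < 1"
  shows "x = indicator T"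
proof -
  have "x = (\<lambda>_. 0) \<or> x = indicator T"
    using assms(1-4) by (simp add: good_def feasible_hard_points_iff)
  moreover have "0 < (1 - \<epsilon>) * real k"
    using assms(4,5) by simp
  ultimately show ?thesis
    using assms(1-4) by (auto simp: good_def opt_hard_instance)
qed

lemma hard_instance_not_good_before_hidden:
  assumes "valid_algorithm A" and "\<epsilon> < 1" and "2 \<le> k" and "T \<subseteq> {..<n}" and "card T = k"
    and unlabeled: "\<forall>i\<le>j. query A n (\<lambda>_. 1) (hard_points k n) (hidden_weights k {}) i \<noteq> indicator T"
  shows "\<not> good n (\<lambda>_. 1) (hard_points k n) (hidden_weights k T) \<epsilon>
           (query A n (\<lambda>_. 1) (hard_points k n) (hidden_weights k T) j)"
proof -
  let ?q = "query A n (\<lambda>_. 1) (hard_points k n)"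
  have "hard_points k n \<noteq> {}"
    by (simp add: hard_points_def)
  then have "?q w i \<in> hard_points k n" for w i
    using assms(1) unfolding valid_algorithm_def query_def by blast
  moreover have "member_oracle n (hidden_weights k T) x = member_oracle n (hidden_weights k {}) x"
    if "x \<in> hard_points k n" and "x \<noteq> indicator T" for x
    using member_oracle_hidden_weights[OF that(1) assms(4) _ assms(3)]
      member_oracle_hidden_weights[OF that(1), of "{}"] that(2) assms(3,5)
    by (simp add: indicator_empty)
  ultimately have "member_oracle n (hidden_weights k T) (?q (hidden_weights k {}) i) =
      member_oracle n (hidden_weights k {}) (?q (hidden_weights k {}) i)" if "i < j" for i
    using that unlabeled by simp
  then have "answers A n (\<lambda>_. 1) (hard_points k n) (hidden_weights k T) j =
      answers A n (\<lambda>_. 1) (hard_points k n) (hidden_weights k {}) j"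
    by (rule answers_eq_if_oracles_agree)
  then have "?q (hidden_weights k T) j = ?q (hidden_weights k {}) j"
    by (simp add: query_def)
  then show ?thesis
    using unlabeled assms(2-5) good_hard_instance_imp_hidden by fastforce
qed

theorem theorem1:
  fixes A :: algorithm and \<epsilon> :: real
  assumes "valid_algorithm A" and "0 < \<epsilon>" and "\<epsilon> < 1"
  shows "\<exists>v X w. (\<forall>n. valid_instance n (v n) (X n) (w n)) \<and>
           (\<exists>c>0. \<forall>\<^sub>F n in sequentially. \<forall>j.
              real (Suc j) < c * real n powr (1 / \<epsilon>) \<longrightarrow>
              \<not> good n (v n) (X n) (w n) \<epsilon> (query A n (v n) (X n) (w n) j))"
proof -
  define m where "m = nat \<lceil>1 / \<epsilon>\<rceil>"
  define k where "k = m + 2"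
  define T where "T n = (SOME T. T \<subseteq> {..<n} \<and> card T = k \<and>
    (\<forall>i. real (Suc i) < real n powr (1 / \<epsilon>) \<longrightarrow>
      query A n (\<lambda>_. 1) (hard_points k n) (hidden_weights k {}) i \<noteq> indicator T))" for n
  have "\<not> good n (\<lambda>_. 1) (hard_points k n) (hidden_weights k (T n)) \<epsilon>
          (query A n (\<lambda>_. 1) (hard_points k n) (hidden_weights k (T n)) j)"
    if "k ^ k < n" and "real (Suc j) < 1 * real n powr (1 / \<epsilon>)" for n j
  proof -
    have "1 / \<epsilon> \<le> real m"
      unfolding m_def by (rule real_nat_ceiling_ge)
    then have "T n \<subseteq> {..<n} \<and> card (T n) = k \<and>
        (\<forall>i. real (Suc i) < real n powr (1 / \<epsilon>) \<longrightarrow>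
          query A n (\<lambda>_. 1) (hard_points k n) (hidden_weights k {}) i \<noteq> indicator (T n))"
      unfolding T_def k_def using that(1)
      by (intro someI_ex[OF exists_subset_avoiding_early_queries]) (simp_all add: k_def)
    moreover have "real (Suc i) < real n powr (1 / \<epsilon>)" if "i \<le> j" for i
      using that \<open>real (Suc j) < 1 * real n powr (1 / \<epsilon>)\<close> by simp
    ultimately show ?thesis
      using assms(1,3) by (intro hard_instance_not_good_before_hidden) (simp_all add: k_def)
  qed
  then show ?thesis
    using valid_hard_instance[of k] unfolding eventually_sequentially
    by (intro exI[of _ "\<lambda>_ _. 1"] exI[of _ "hard_points k"] exI[of _ "\<lambda>n. hidden_weights k (T n)"]
        conjI exI[of _ 1] exI[of _ "Suc (k ^ k)"]) (auto simp: k_def)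
qed

end
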